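(* Let $\mathcal{G}$ be a multi-layer graph with $l$ layers, $d,s,k\in\mathbb{N}$ with $k\ge1$, and $\mathcal{R}$ a collection of exactly $k$ subsets of $V(\mathcal{G})$. Let $L\subseteq\{1,\dots,l\}$ with $|L|>s$, and let $U$ be a potential vertex set for $L$, i.e., $U\subseteq V(\mathcal{G})$ with $C^d_S(\mathcal{G})\subseteq U$ for every top-down descendant $S$ of $L$ with $|S|=s$. If $|\mathsf{Cov}((\mathcal{R}-\{C^*(\mathcal{R})\})\cup\{U\})|<(1+\frac1k)|\mathsf{Cov}(\mathcal{R})|$, then every top-down descendant $S$ of $L$ with $|S|=s$ satisfies $|\mathsf{Cov}((\mathcal{R}-\{C^*(\mathcal{R})\})\cup\{C^d_S(\mathcal{G})\})|<(1+\frac1k)|\mathsf{Cov}(\mathcal{R})|$.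
   Context: A multi-layer graph $\mathcal{G}=(V,E_1,\dots,E_l)$ consists of a finite vertex set $V$ and edge sets $E_i$ of simple undirected graphs $G_i=(V,E_i)$. A graph is $d$-dense if every vertex has degree at least $d$; the $d$-coherent core $C^d_L(\mathcal{G})$ is the unique maximal $S\subseteq V$ such that the induced subgraph $G_i[S]$ is $d$-dense for all $i\in L$. Top-down search tree on subsets of $\{1,\dots,l\}$: $L$ is the parent of $L'$ if $L'=L-\{\ell\}$ for some $\ell\in L$ with $\ell>\max(\{1,\dots,l\}-L)$ ($\max(\emptyset)=-\infty$); top-down descendants of $L$ are obtained by iterating the child relation. For a collection $\mathcal{R}$ of sets, $\mathsf{Cov}(\mathcal{R})=\bigcup_{R\in\mathcal{R}}R$; for $C'\in\mathcal{R}$, $\Delta(\mathcal{R},C')=C'-\mathsf{Cov}(\mathcal{R}-\{C'\})$; $C^*(\mathcal{R})$ is a fixed element of $\mathcal{R}$ minimizing $|\Delta(\mathcal{R},C')|$. *)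

theory Defs
  imports Complex_Main
begin

definition multilayer_graph :: "'a set \<Rightarrow> nat \<Rightarrow> (nat \<Rightarrow> 'a \<Rightarrow> 'a \<Rightarrow> bool) \<Rightarrow> bool" where
  "multilayer_graph V l E \<longleftrightarrow> finite V \<and>
     (\<forall>i\<in>{1..l}. (\<forall>u v. E i u v \<longrightarrow> u \<in> V \<and> v \<in> V) \<and>
                  (\<forall>u v. E i u v \<longleftrightarrow> E i v u) \<and> (\<forall>u. \<not> E i u u))"

definition dense_in :: "(nat \<Rightarrow> 'a \<Rightarrow> 'a \<Rightarrow> bool) \<Rightarrow> nat \<Rightarrow> nat \<Rightarrow> 'a set \<Rightarrow> bool" where
  "dense_in E i d S \<longleftrightarrow> (\<forall>v\<in>S. d \<le> card {u \<in> S. E i v u})"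

definition coherent_core :: "'a set \<Rightarrow> (nat \<Rightarrow> 'a \<Rightarrow> 'a \<Rightarrow> bool) \<Rightarrow> nat \<Rightarrow> nat set \<Rightarrow> 'a set" where
  "coherent_core V E d L = Greatest (\<lambda>S. S \<subseteq> V \<and> (\<forall>i\<in>L. dense_in E i d S))"

text \<open>Top-down search tree: L' is a child of L (L \<subseteq> {1..l}) if L' = L - {m} with m \<in> L and
  m > max({1..l} - L), where max of the empty set is -\<infinity>.\<close>
definition td_child :: "nat \<Rightarrow> nat set \<Rightarrow> nat set \<Rightarrow> bool" where
  "td_child l L L' \<longleftrightarrow> L \<subseteq> {1..l} \<and>
     (\<exists>m\<in>L. L' = L - {m} \<and> (\<forall>j\<in>{1..l} - L. j < m))"

definition td_descendant :: "nat \<Rightarrow> nat set \<Rightarrow> nat set \<Rightarrow> bool" where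
  "td_descendant l L S \<longleftrightarrow> (td_child l)\<^sup>+\<^sup>+ L S"

definition Cov :: "'a set set \<Rightarrow> 'a set" where
  "Cov R = \<Union> R"

definition Delta :: "'a set set \<Rightarrow> 'a set \<Rightarrow> 'a set" where
  "Delta R C' = C' - Cov (R - {C'})"

end

theory Submission
  imports Defs
begin

lemma Cov_insert_mono:
  assumes "A \<subseteq> B"
  shows "Cov (R \<union> {A}) \<subseteq> Cov (R \<union> {B})"
  using assms unfolding Cov_def by blast

lemma card_Cov_insert_mono:
  assumes "A \<subseteq> B" and "finite (Cov (R \<union> {B}))"
  shows "card (Cov (R \<union> {A})) \<le> card (Cov (R \<union> {B}))"
  using card_mono[OF assms(2) Cov_insert_mono[OF assms(1)]] .

lemma finite_Cov_of_subsets: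
  assumes "finite V" and "\<forall>C\<in>R. C \<subseteq> V"
  shows "finite (Cov R)"
  using assms unfolding Cov_def by (meson Sup_least finite_subset)

theorem lemma5:
  fixes V :: "'a set" and l :: nat and E :: "nat \<Rightarrow> 'a \<Rightarrow> 'a \<Rightarrow> bool"
    and d s k :: nat and R :: "'a set set" and Cstar :: "'a set"
    and L :: "nat set" and U :: "'a set"
  assumes G: "multilayer_graph V l E"
    and k: "k \<ge> 1"
    and R: "card R = k" "\<forall>C\<in>R. C \<subseteq> V"
    and Cstar: "Cstar \<in> R" "\<forall>C\<in>R. card (Delta R Cstar) \<le> card (Delta R C)"
    and L: "L \<subseteq> {1..l}" "card L > s"
    and U: "U \<subseteq> V"
           "\<forall>S. td_descendant l L S \<and> card S = s \<longrightarrow> coherent_core V E d S \<subseteq> U"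
    and cov: "real (card (Cov ((R - {Cstar}) \<union> {U}))) < (1 + 1 / real k) * real (card (Cov R))"
  shows "\<forall>S. td_descendant l L S \<and> card S = s \<longrightarrow>
           real (card (Cov ((R - {Cstar}) \<union> {coherent_core V E d S})))
             < (1 + 1 / real k) * real (card (Cov R))"
proof (intro allI impI)
  fix S assume S: "td_descendant l L S \<and> card S = s"
  have "finite V" using G unfolding multilayer_graph_def by blast
  then have "finite (Cov ((R - {Cstar}) \<union> {U}))"
    using R(2) U(1) by (intro finite_Cov_of_subsets) auto
  moreover have "coherent_core V E d S \<subseteq> U" using U(2) S by blast
  ultimately have "card (Cov ((R - {Cstar}) \<union> {coherent_core V E d S}))
      \<le> card (Cov ((R - {Cstar}) \<union> {U}))"
    by (intro card_Cov_insert_mono)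
  with cov show "real (card (Cov ((R - {Cstar}) \<union> {coherent_core V E d S})))
      < (1 + 1 / real k) * real (card (Cov R))" by linarith
qed

end
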